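(* For the link two-relaxation-times scheme described in the context, under diffusive scaling, i.e. $\lambda=\mu/\Delta x$ with $\mu>0$ fixed as $\Delta x\to0$, and assuming $\epsilon_{2j}=\Delta x\,\tilde\epsilon_{2j}$ with $\tilde\epsilon_{2j}$ and $\epsilon_{2j+1}$ fixed as $\Delta x\to0$ for $j\in\{1,\dots,W\}$, the modified equation of the bulk finite difference scheme $p_2(z)m_1=0$ is, for $(t,x)\in\mathbb{R}_+\times\mathbb{R}^d$, $$\partial_t\phi(t,x)+\mu\sum_{j=1}^W\tilde\epsilon_{2j}\sum_{|\mathfrak n|=1}c_{2j}^{\mathfrak n}\partial_x^{\mathfrak n}\phi(t,x)-2\mu\Big(\frac1s-\frac12\Big)\sum_{j=1}^W\epsilon_{2j+1}\sum_{|\mathfrak n|=2}\frac{c_{2j}^{\mathfrak n}}{\mathfrak n!}\partial_x^{\mathfrak n}\phi(t,x)=O(\Delta x^2).$$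
   Context: Let $d\ge1$, $W\in\mathbb{N}^*$, $q=1+2W$. Velocities $c_1=0$, $c_{2j}=-c_{2j+1}\in\mathbb{Z}^d$, $j\in\{1,\dots,W\}$. Moment matrix $M$ with first row $(1,\dots,1)$ and, for each $j$, row $2j$ with entries $1,-1$ in columns $2j,2j+1$, row $2j+1$ with entries $1,1$ in columns $2j,2j+1$, zeros elsewhere. Relaxation parameters $s_{2j}=s\in(0,2]$ (fixed), $s_{2j+1}=2-s$; equilibrium coefficients $\epsilon\in\mathbb{R}^q$, $\epsilon_1=1$. Time step $\Delta t=\Delta x/\lambda=\Delta x^2/\mu$. Shifts $(x_\ell\phi)(x)=\phi(x-\Delta xe_\ell)$, $x^c=\prod x_\ell^{c_\ell}$; $\mathsf S(\mathsf d)=(\mathsf d(x)+\mathsf d(x^{-1}))/2$, $\mathsf A(\mathsf d)=(\mathsf d(x)-\mathsf d(x^{-1}))/2$. Time shift $(z\phi)(t)=\phi(t+\Delta t)$. Multi-index notation $c^{\mathfrak n}=\prod c_\ell^{\mathfrak n_\ell}$, $\mathfrak n!=\prod\mathfrak n_\ell!$, $\partial_x^{\mathfrak n}=\prod\partial_{x_\ell}^{\mathfrak n_\ell}$. The bulk finite difference scheme for the conserved moment is $p_2(z)m_1=0$ with $p_2(z)=z^2+(s-2)z+(1-s)-zs\sum_j\mathsf A(x^{c_{2j}})\epsilon_{2j}+z(s-2)\sum_j(\mathsf S(x^{c_{2j}})-1)\epsilon_{2j+1}$. Its modified equation is obtained by substituting a smooth $\phi$ into $p_2(z)\phi=0$,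 Taylor-expanding in $\Delta x$, normalising so that $\partial_t$ has coefficient one, and eliminating higher-order time derivatives using lower-order relations. *)

theory Defs
  imports "HOL-Analysis.Analysis" "HOL-Library.Landau_Symbols"
begin

definition pd :: "'d::finite option \<Rightarrow> (real \<Rightarrow> real^'d \<Rightarrow> real) \<Rightarrow> (real \<Rightarrow> real^'d \<Rightarrow> real)" where
  "pd dir f = (case dir of
      None \<Rightarrow> (\<lambda>t x. deriv (\<lambda>s. f s x) t)
    | Some l \<Rightarrow> (\<lambda>t x. deriv (\<lambda>h. f t (x + h *\<^sub>R axis l 1)) 0))"

definition pd_exists :: "'d::finite option \<Rightarrow> (real \<Rightarrow> real^'d \<Rightarrow> real) \<Rightarrow> bool" where
  "pd_exists dir f = (\<forall>t x. case dir of
      None \<Rightarrow> (\<lambda>s. f s x) differentiable (at t)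
    | Some l \<Rightarrow> (\<lambda>h. f t (x + h *\<^sub>R axis l 1)) differentiable (at 0))"

definition iter_pd :: "'d::finite option list \<Rightarrow> (real \<Rightarrow> real^'d \<Rightarrow> real) \<Rightarrow> (real \<Rightarrow> real^'d \<Rightarrow> real)" where
  "iter_pd ds f = foldr pd ds f"

definition smooth_tx :: "(real \<Rightarrow> real^'d::finite \<Rightarrow> real) \<Rightarrow> bool" where
  "smooth_tx f = (\<forall>ds. continuous_on UNIV (\<lambda>p. iter_pd ds f (fst p) (snd p))
                     \<and> (\<forall>dir. pd_exists dir (iter_pd ds f)))"

definition coord_list :: "'d::finite list" where
  "coord_list = (SOME xs. distinct xs \<and> set xs = UNIV)"

definition dx_multi :: "('d::finite \<Rightarrow> nat) \<Rightarrow> (real \<Rightarrow> real^'d \<Rightarrow> real) \<Rightarrow> (real \<Rightarrow> real^'d \<Rightarrow> real)" where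
  "dx_multi n f = iter_pd (concat (map (\<lambda>l. replicate (n l) (Some l)) coord_list)) f"

definition mpow :: "real^'d::finite \<Rightarrow> ('d \<Rightarrow> nat) \<Rightarrow> real" where
  "mpow c n = (\<Prod>l\<in>UNIV. (c $ l) ^ (n l))"

definition mfact :: "('d::finite \<Rightarrow> nat) \<Rightarrow> real" where
  "mfact n = (\<Prod>l\<in>UNIV. fact (n l))"

definition multi_indices :: "nat \<Rightarrow> ('d::finite \<Rightarrow> nat) set" where
  "multi_indices k = {n. (\<Sum>l\<in>UNIV. n l) = k}"

text \<open>Shift operators. (x^c phi)(x) = phi(x - dx c); S and A of the monomial x^c.\<close>
definition xsh :: "real \<Rightarrow> real^'d::finite \<Rightarrow> (real \<Rightarrow> real^'d \<Rightarrow> real) \<Rightarrow> (real \<Rightarrow> real^'d \<Rightarrow> real)" where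
  "xsh dx c f = (\<lambda>t x. f t (x - dx *\<^sub>R c))"

definition Sop :: "real \<Rightarrow> real^'d::finite \<Rightarrow> (real \<Rightarrow> real^'d \<Rightarrow> real) \<Rightarrow> (real \<Rightarrow> real^'d \<Rightarrow> real)" where
  "Sop dx c f = (\<lambda>t x. (xsh dx c f t x + xsh dx (- c) f t x) / 2)"

definition Aop :: "real \<Rightarrow> real^'d::finite \<Rightarrow> (real \<Rightarrow> real^'d \<Rightarrow> real) \<Rightarrow> (real \<Rightarrow> real^'d \<Rightarrow> real)" where
  "Aop dx c f = (\<lambda>t x. (xsh dx c f t x - xsh dx (- c) f t x) / 2)"

definition zsh :: "real \<Rightarrow> (real \<Rightarrow> real^'d::finite \<Rightarrow> real) \<Rightarrow> (real \<Rightarrow> real^'d \<Rightarrow> real)" where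
  "zsh dt f = (\<lambda>t x. f (t + dt) x)"

definition p2op :: "real \<Rightarrow> real \<Rightarrow> real \<Rightarrow> nat \<Rightarrow> (nat \<Rightarrow> real^'d::finite) \<Rightarrow> (nat \<Rightarrow> real)
     \<Rightarrow> (real \<Rightarrow> real^'d \<Rightarrow> real) \<Rightarrow> (real \<Rightarrow> real^'d \<Rightarrow> real)" where
  "p2op s dt dx W c eps f = (\<lambda>t x.
       zsh dt (zsh dt f) t x + (s - 2) * zsh dt f t x + (1 - s) * f t x
     - s * zsh dt (\<lambda>t' x'. \<Sum>j=1..W. eps (2*j) * Aop dx (c (2*j)) f t' x') t x
     + (s - 2) * zsh dt (\<lambda>t' x'. \<Sum>j=1..W. eps (2*j+1) * (Sop dx (c (2*j)) f t' x' - f t' x')) t x)"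

end

theory Submission
  imports Defs
begin

text \<open>
  Substitute \<open>\<phi>\<close> into the scheme and multiply by \<open>\<mu> / (s \<Delta>x\<^sup>2) = 1 / (s \<Delta>t)\<close>. The residual
  splits into three consistency defects, each \<open>O(\<Delta>x\<^sup>2)\<close>. The time stepping part
  \<open>(\<phi>(t + 2\<Delta>t) + (s - 2) \<phi>(t + \<Delta>t) + (1 - s) \<phi>(t)) / (s \<Delta>t) - \<partial>\<^sub>t\<phi>\<close> is \<open>O(\<Delta>t)\<close> by
  Taylor's formula in time. The antisymmetric part of the \<open>j\<close>-th link carries the coefficient
  \<open>\<Delta>x etil (2 j)\<close>, so it is \<open>\<mu> etil (2 j)\<close> times the centred first difference quotient of
  \<open>\<phi>(t + \<Delta>t, \<cdot>)\<close> along \<open>c\<^sub>2\<^sub>j\<close>, and the symmetric part is a multiple of the centred second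
  difference quotient; in both, the Taylor terms along \<open>c\<^sub>2\<^sub>j\<close> of the wrong parity cancel, and
  moving the resulting derivative from \<open>t + \<Delta>t\<close> back to \<open>t\<close> costs \<open>O(\<Delta>t) = O(\<Delta>x\<^sup>2)\<close>.
  Finally, the multi-index sums of order one and two are \<open>(c \<cdot> \<nabla>) \<phi>\<close> and
  \<open>(c \<cdot> \<nabla>)\<^sup>2 \<phi> / 2\<close>, the latter by Schwarz's theorem.
\<close>

section \<open>Partial derivatives\<close>

lemma iter_pd_Nil [simp]: "iter_pd [] f = f"
  by (simp add: iter_pd_def)

lemma iter_pd_Cons [simp]: "iter_pd (d # ds) f = pd d (iter_pd ds f)"
  by (simp add: iter_pd_def)

lemma iter_pd_append: "iter_pd (ds @ es) f = iter_pd ds (iter_pd es f)"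
  by (simp add: iter_pd_def)

lemma smooth_tx_pd: "smooth_tx f \<Longrightarrow> smooth_tx (pd d f)"
  unfolding smooth_tx_def by (metis iter_pd_append iter_pd_Cons iter_pd_Nil)

lemma smooth_tx_iter_pd: "smooth_tx f \<Longrightarrow> smooth_tx (iter_pd ds f)"
  by (induction ds) (simp_all add: smooth_tx_pd)

lemma smooth_tx_continuous: "smooth_tx f \<Longrightarrow> continuous_on UNIV (\<lambda>p. f (fst p) (snd p))"
  unfolding smooth_tx_def by (metis iter_pd_Nil)

lemma smooth_tx_continuous_space:
  assumes "smooth_tx f"
  shows "continuous_on UNIV (f t)"
proof -
  have "continuous_on UNIV ((\<lambda>p. f (fst p) (snd p)) \<circ> Pair t)"
    using smooth_tx_continuous[OF assms]
    by (intro continuous_on_compose continuous_intros) (auto elim: continuous_on_subset)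
  then show ?thesis by (simp add: o_def)
qed

lemma smooth_tx_pd_exists: "smooth_tx f \<Longrightarrow> pd_exists d f"
  unfolding smooth_tx_def by (metis iter_pd_Nil)

lemma pd_exists_time_DERIV:
  "pd_exists None f \<Longrightarrow> ((\<lambda>s. f s x) has_real_derivative pd None f t x) (at t)"
  unfolding pd_exists_def pd_def by (simp add: DERIV_deriv_iff_real_differentiable)

lemma pd_exists_space_DERIV:
  assumes "pd_exists (Some l) f"
  shows "((\<lambda>p. f t (y + p *\<^sub>R axis l 1)) has_real_derivative pd (Some l) f t (y + q *\<^sub>R axis l 1)) (at q)"
proof -
  have "((\<lambda>p. f t ((y + q *\<^sub>R axis l 1) + p *\<^sub>R axis l 1)) has_real_derivative
      pd (Some l) f t (y + q *\<^sub>R axis l 1)) (at 0)"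
    using assms unfolding pd_exists_def pd_def by (simp add: DERIV_deriv_iff_real_differentiable)
  then have "((\<lambda>p. f t (y + (p + q) *\<^sub>R axis l 1)) has_real_derivative
      pd (Some l) f t (y + q *\<^sub>R axis l 1)) (at 0)"
    by (simp add: algebra_simps scaleR_add_left)
  then show ?thesis
    using DERIV_shift[of "\<lambda>p. f t (y + p *\<^sub>R axis l 1)" _ 0 q] by simp
qed

lemma pd_sum:
  assumes "finite A" and "\<And>i. i \<in> A \<Longrightarrow> pd_exists d (g i)"
  shows "pd d (\<lambda>t x. \<Sum>i\<in>A. a i * g i t x) = (\<lambda>t x. \<Sum>i\<in>A. a i * pd d (g i) t x)
       \<and> pd_exists d (\<lambda>t x. \<Sum>i\<in>A. a i * g i t x)"
proof (cases d)
  case None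
  have "((\<lambda>s. \<Sum>i\<in>A. a i * g i s x) has_real_derivative (\<Sum>i\<in>A. a i * pd None (g i) t x)) (at t)"
    for t x
    using assms None by (intro DERIV_sum DERIV_cmult pd_exists_time_DERIV) auto
  then show ?thesis
    using None by (auto simp: pd_def pd_exists_def real_differentiable_def intro!: ext DERIV_imp_deriv)
next
  case (Some l)
  have "((\<lambda>p. \<Sum>i\<in>A. a i * g i t (x + p *\<^sub>R axis l 1)) has_real_derivative
      (\<Sum>i\<in>A. a i * pd (Some l) (g i) t (x + 0 *\<^sub>R axis l 1))) (at 0)" for t x
    using assms Some by (intro DERIV_sum DERIV_cmult pd_exists_space_DERIV) auto
  then show ?thesis
    using Some by (auto simp: pd_def pd_exists_def real_differentiable_def intro!: ext DERIV_imp_deriv)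
qed

lemma iter_pd_sum:
  assumes "finite A" and "\<And>i. i \<in> A \<Longrightarrow> smooth_tx (g i)"
  shows "iter_pd ds (\<lambda>t x. \<Sum>i\<in>A. a i * g i t x) = (\<lambda>t x. \<Sum>i\<in>A. a i * iter_pd ds (g i) t x)"
proof (induction ds)
  case (Cons d ds)
  have "pd_exists d (iter_pd ds (g i))" if "i \<in> A" for i
    using assms(2)[OF that] by (simp add: smooth_tx_pd_exists smooth_tx_iter_pd)
  then show ?case
    using Cons pd_sum[OF \<open>finite A\<close>, of d "\<lambda>i. iter_pd ds (g i)" a] by simp
qed simp

lemma smooth_tx_sum:
  assumes "finite A" and "\<And>i. i \<in> A \<Longrightarrow> smooth_tx (g i)"
  shows "smooth_tx (\<lambda>t x. \<Sum>i\<in>A. a i * g i t x)"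
proof -
  have "continuous_on UNIV (\<lambda>p. \<Sum>i\<in>A. a i * iter_pd ds (g i) (fst p) (snd p))" for ds
    using assms(2) smooth_tx_continuous smooth_tx_iter_pd
    by (intro continuous_on_sum continuous_on_mult_left) blast
  moreover have "pd_exists d (\<lambda>t x. \<Sum>i\<in>A. a i * iter_pd ds (g i) t x)" for ds d
    using pd_sum[OF \<open>finite A\<close>, of d "\<lambda>i. iter_pd ds (g i)" a] assms(2)
    by (simp add: smooth_tx_pd_exists smooth_tx_iter_pd)
  ultimately show ?thesis
    by (simp add: smooth_tx_def iter_pd_sum[OF assms])
qed

lemma DERIV_mean_value:
  assumes "\<And>q. (g has_real_derivative g' q) (at q)"
  obtains \<xi> where "\<bar>\<xi>\<bar> \<le> \<bar>x\<bar>" "g x = g 0 + g' \<xi> * x"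
  using Maclaurin_bi_le[where diff="\<lambda>m. if m = 0 then g else g'" and n=1 and f=g and x=x] assms
  by auto

definition proj_coords :: "'d::finite set \<Rightarrow> real^'d \<Rightarrow> real^'d" where
  "proj_coords S w = (\<chi> l. if l \<in> S then w$l else 0)"

lemma proj_coords_empty [simp]: "proj_coords {} w = 0"
  by (simp add: proj_coords_def vec_eq_iff)

lemma proj_coords_UNIV [simp]: "proj_coords UNIV w = w"
  by (simp add: proj_coords_def vec_eq_iff)

lemma proj_coords_insert:
  "a \<notin> S \<Longrightarrow> proj_coords (insert a S) w = proj_coords S w + (w$a) *\<^sub>R axis a 1"
  by (auto simp: proj_coords_def vec_eq_iff axis_def)

lemma norm_proj_coords_le: "norm (proj_coords S w + q *\<^sub>R axis a 1) \<le> norm w"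
  if "a \<notin> S" "\<bar>q\<bar> \<le> \<bar>w$a\<bar>"
  by (rule norm_le_componentwise_cart) (use that in \<open>auto simp: proj_coords_def axis_def\<close>)

text \<open>Walk from \<open>y\<close> to \<open>y + w\<close> one coordinate at a time and apply the mean value theorem
  on each coordinate segment.\<close>
lemma increment_along_coordinates:
  fixes F :: "real^'d::finite \<Rightarrow> real" and P :: "'d \<Rightarrow> real^'d \<Rightarrow> real"
  assumes D: "\<And>l z q. ((\<lambda>p. F (z + p *\<^sub>R axis l 1)) has_real_derivative P l (z + q *\<^sub>R axis l 1)) (at q)"
    and close: "\<And>l z. norm (z - y) \<le> norm w \<Longrightarrow> \<bar>P l z - P l y\<bar> \<le> e"
  shows "\<bar>F (y + proj_coords S w) - F y - (\<Sum>l\<in>S. w$l * P l y)\<bar> \<le> e * (\<Sum>l\<in>S. \<bar>w$l\<bar>)"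
proof (induction S rule: finite_induct[OF finite])
  case (2 a S)
  define u where "u = y + proj_coords S w"
  obtain \<xi> where \<xi>: "\<bar>\<xi>\<bar> \<le> \<bar>w$a\<bar>"
    "F (u + (w$a) *\<^sub>R axis a 1) = F u + P a (u + \<xi> *\<^sub>R axis a 1) * w$a"
    by (rule DERIV_mean_value[of "\<lambda>p. F (u + p *\<^sub>R axis a 1)" "\<lambda>q. P a (u + q *\<^sub>R axis a 1)"])
      (auto intro: D)
  have "\<bar>P a (u + \<xi> *\<^sub>R axis a 1) - P a y\<bar> \<le> e"
    using close norm_proj_coords_le[OF \<open>a \<notin> S\<close> \<xi>(1)] by (simp add: u_def add.assoc)
  then have "\<bar>w$a\<bar> * \<bar>P a (u + \<xi> *\<^sub>R axis a 1) - P a y\<bar> \<le> \<bar>w$a\<bar> * e"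
    by (rule mult_left_mono) simp
  moreover have "F (u + (w$a) *\<^sub>R axis a 1) - F u - w$a * P a y = w$a * (P a (u + \<xi> *\<^sub>R axis a 1) - P a y)"
    by (simp add: \<xi>(2) algebra_simps)
  ultimately have "\<bar>F (u + (w$a) *\<^sub>R axis a 1) - F u - w$a * P a y\<bar> \<le> e * \<bar>w$a\<bar>"
    by (simp add: abs_mult mult.commute)
  moreover have "y + proj_coords (insert a S) w = u + (w$a) *\<^sub>R axis a 1"
    using \<open>a \<notin> S\<close> by (simp add: proj_coords_insert u_def algebra_simps)
  ultimately show ?case
    using 2 by (simp add: u_def algebra_simps)
qed simp

lemma has_derivative_of_continuous_partials:
  fixes F :: "real^'d::finite \<Rightarrow> real" and P :: "'d \<Rightarrow> real^'d \<Rightarrow> real"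
  assumes D: "\<And>l z q. ((\<lambda>p. F (z + p *\<^sub>R axis l 1)) has_real_derivative P l (z + q *\<^sub>R axis l 1)) (at q)"
    and C: "\<And>l. continuous_on UNIV (P l)"
  shows "(F has_derivative (\<lambda>w. \<Sum>l\<in>UNIV. w$l * P l y)) (at y)"
  unfolding has_derivative_at_alt
proof (intro conjI allI impI)
  show "bounded_linear (\<lambda>w. \<Sum>l\<in>UNIV. w$l * P l y)"
    unfolding linear_conv_bounded_linear[symmetric]
    by (intro linearI) (auto simp: sum.distrib sum_distrib_left algebra_simps)
  fix e :: real
  assume "0 < e"
  define e' where "e' = e / CARD('d)"
  have "e' > 0"
    using \<open>0 < e\<close> by (simp add: e'_def)
  have "\<forall>\<^sub>F z in at y. \<bar>P l z - P l y\<bar> < e'" for l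
    using C[of l] tendstoD[OF _ \<open>e' > 0\<close>, of "P l" "P l y" "at y"]
    by (simp add: continuous_on_eq_continuous_at isCont_def dist_real_def)
  then have "\<forall>\<^sub>F z in at y. \<forall>l. \<bar>P l z - P l y\<bar> < e'"
    by (rule eventually_all_finite)
  then obtain d where "d > 0" and d: "\<And>z. z \<noteq> y \<Longrightarrow> dist z y < d \<Longrightarrow> \<forall>l. \<bar>P l z - P l y\<bar> < e'"
    unfolding eventually_at by blast
  have close: "\<bar>P l z - P l y\<bar> \<le> e'" if "dist z y < d" for z l
    using d[OF _ that] \<open>e' > 0\<close> by (cases "z = y") (auto simp: less_imp_le)
  show "\<exists>d>0. \<forall>z. norm (z - y) < d \<longrightarrow>
          norm (F z - F y - (\<Sum>l\<in>UNIV. (z - y)$l * P l y)) \<le> e * norm (z - y)"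
  proof (intro exI[of _ d] conjI allI impI)
    fix z
    assume z: "norm (z - y) < d"
    have "\<bar>F (y + proj_coords UNIV (z - y)) - F y - (\<Sum>l\<in>UNIV. (z - y)$l * P l y)\<bar>
        \<le> e' * (\<Sum>l\<in>UNIV. \<bar>(z - y)$l\<bar>)"
      using z close by (intro increment_along_coordinates[OF D]) (simp add: dist_norm)
    also have "\<dots> \<le> e' * (CARD('d) * norm (z - y))"
      using sum_mono[of UNIV "\<lambda>l. \<bar>(z - y)$l\<bar>" "\<lambda>_. norm (z - y)"] \<open>e' > 0\<close>
      by (simp add: component_le_norm_cart[of "z - y", simplified])
    finally show "norm (F z - F y - (\<Sum>l\<in>UNIV. (z - y)$l * P l y)) \<le> e * norm (z - y)"
      by (simp add: e'_def)
  qed (fact \<open>d > 0\<close>)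
qed

lemma smooth_tx_DERIV_direction:
  assumes "smooth_tx f"
  shows "((\<lambda>h. f t (y + h *\<^sub>R c)) has_real_derivative
           (\<Sum>l\<in>UNIV. c$l * pd (Some l) f t (y + h *\<^sub>R c))) (at h)"
proof -
  have inner: "((\<lambda>h. y + h *\<^sub>R c) has_derivative (\<lambda>k. k *\<^sub>R c)) (at h)"
    by (auto intro!: derivative_eq_intros)
  have "(f t has_derivative (\<lambda>w. \<Sum>l\<in>UNIV. w$l * pd (Some l) f t (y + h *\<^sub>R c))) (at (y + h *\<^sub>R c))"
    using assms
    by (intro has_derivative_of_continuous_partials pd_exists_space_DERIV smooth_tx_pd_exists
          smooth_tx_continuous_space smooth_tx_pd)
  from has_derivative_compose[OF inner this]
  show ?thesis
    by (rule has_derivative_imp_has_field_derivative) (simp add: sum_distrib_left algebra_simps)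
qed

lemma mixed_difference_mean_value:
  assumes "smooth_tx f"
  obtains \<xi> \<eta> where "\<bar>\<xi>\<bar> \<le> \<bar>h\<bar>" "\<bar>\<eta>\<bar> \<le> \<bar>h\<bar>"
    "f t (x + h *\<^sub>R axis a 1 + h *\<^sub>R axis b 1) - f t (x + h *\<^sub>R axis a 1)
       - f t (x + h *\<^sub>R axis b 1) + f t x
     = h * h * pd (Some b) (pd (Some a) f) t (x + \<xi> *\<^sub>R axis a 1 + \<eta> *\<^sub>R axis b 1)"
proof -
  let ?ea = "axis a 1 :: real^'a" and ?eb = "axis b 1 :: real^'a"
  have fa: "pd_exists (Some a) f" and fab: "pd_exists (Some b) (pd (Some a) f)"
    using assms by (simp_all add: smooth_tx_pd_exists smooth_tx_pd)
  obtain \<xi> where \<xi>: "\<bar>\<xi>\<bar> \<le> \<bar>h\<bar>"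
    "f t (x + h *\<^sub>R ?eb + h *\<^sub>R ?ea) - f t (x + h *\<^sub>R ?ea)
     = f t (x + h *\<^sub>R ?eb) - f t x
       + (pd (Some a) f t (x + h *\<^sub>R ?eb + \<xi> *\<^sub>R ?ea) - pd (Some a) f t (x + \<xi> *\<^sub>R ?ea)) * h"
    by (rule DERIV_mean_value[of "\<lambda>p. f t (x + h *\<^sub>R ?eb + p *\<^sub>R ?ea) - f t (x + p *\<^sub>R ?ea)"])
      (auto intro!: DERIV_diff pd_exists_space_DERIV fa)
  obtain \<eta> where \<eta>: "\<bar>\<eta>\<bar> \<le> \<bar>h\<bar>"
    "pd (Some a) f t (x + \<xi> *\<^sub>R ?ea + h *\<^sub>R ?eb)
     = pd (Some a) f t (x + \<xi> *\<^sub>R ?ea) + pd (Some b) (pd (Some a) f) t (x + \<xi> *\<^sub>R ?ea + \<eta> *\<^sub>R ?eb) * h"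
    by (rule DERIV_mean_value[of "\<lambda>p. pd (Some a) f t (x + \<xi> *\<^sub>R ?ea + p *\<^sub>R ?eb)"])
      (auto intro!: pd_exists_space_DERIV fab)
  have "x + h *\<^sub>R ?eb + h *\<^sub>R ?ea = x + h *\<^sub>R ?ea + h *\<^sub>R ?eb"
    and "x + h *\<^sub>R ?eb + \<xi> *\<^sub>R ?ea = x + \<xi> *\<^sub>R ?ea + h *\<^sub>R ?eb"
    by (simp_all add: algebra_simps)
  with \<xi> \<eta> show ?thesis
    by (intro that[of \<xi> \<eta>]) (simp_all add: algebra_simps)
qed

text \<open>Schwarz's theorem: the mixed second difference quotient is a value of both mixed partial
  derivatives near \<open>x\<close>, so by continuity they agree at \<open>x\<close>.\<close>
lemma pd_commute:
  assumes "smooth_tx f"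
  shows "pd (Some a) (pd (Some b) f) = pd (Some b) (pd (Some a) f)"
proof (intro ext, rule ccontr)
  fix t x
  let ?G1 = "pd (Some b) (pd (Some a) f) t" and ?G2 = "pd (Some a) (pd (Some b) f) t"
  assume "?G2 x \<noteq> ?G1 x"
  define e where "e = \<bar>?G1 x - ?G2 x\<bar> / 2"
  have "e > 0"
    using \<open>?G2 x \<noteq> ?G1 x\<close> by (simp add: e_def)
  have "continuous (at x) ?G1" "continuous (at x) ?G2"
    using smooth_tx_continuous_space[OF smooth_tx_pd[OF smooth_tx_pd[OF assms]]]
    by (simp_all add: continuous_on_eq_continuous_at)
  then obtain d1 d2 where "d1 > 0" "d2 > 0"
    and d1: "\<And>z. dist z x < d1 \<Longrightarrow> dist (?G1 z) (?G1 x) < e"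
    and d2: "\<And>z. dist z x < d2 \<Longrightarrow> dist (?G2 z) (?G2 x) < e"
    using \<open>e > 0\<close> unfolding continuous_at_eps_delta by metis
  define h where "h = min d1 d2 / 3"
  have "h > 0" "2 * h < d1" "2 * h < d2"
    using \<open>d1 > 0\<close> \<open>d2 > 0\<close> by (auto simp: h_def)
  have near: "dist (x + u *\<^sub>R axis i 1 + v *\<^sub>R axis j 1) x \<le> 2 * h"
    if "\<bar>u\<bar> \<le> \<bar>h\<bar>" "\<bar>v\<bar> \<le> \<bar>h\<bar>" for u v :: real and i j
    using that norm_triangle_ineq[of "u *\<^sub>R axis i (1::real)" "v *\<^sub>R axis j 1"] \<open>h > 0\<close>
    by (simp add: dist_norm add.assoc)
  obtain \<xi> \<eta> where \<xi>\<eta>: "\<bar>\<xi>\<bar> \<le> \<bar>h\<bar>" "\<bar>\<eta>\<bar> \<le> \<bar>h\<bar>"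
    "f t (x + h *\<^sub>R axis a 1 + h *\<^sub>R axis b 1) - f t (x + h *\<^sub>R axis a 1)
       - f t (x + h *\<^sub>R axis b 1) + f t x = h * h * ?G1 (x + \<xi> *\<^sub>R axis a 1 + \<eta> *\<^sub>R axis b 1)"
    by (rule mixed_difference_mean_value[OF assms])
  obtain \<xi>' \<eta>' where \<xi>\<eta>': "\<bar>\<xi>'\<bar> \<le> \<bar>h\<bar>" "\<bar>\<eta>'\<bar> \<le> \<bar>h\<bar>"
    "f t (x + h *\<^sub>R axis b 1 + h *\<^sub>R axis a 1) - f t (x + h *\<^sub>R axis b 1)
       - f t (x + h *\<^sub>R axis a 1) + f t x = h * h * ?G2 (x + \<xi>' *\<^sub>R axis b 1 + \<eta>' *\<^sub>R axis a 1)"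
    by (rule mixed_difference_mean_value[OF assms])
  have swap: "x + h *\<^sub>R axis b 1 + h *\<^sub>R axis a 1 = x + h *\<^sub>R axis a 1 + h *\<^sub>R axis b 1"
    by (simp add: algebra_simps)
  have "h * h * ?G1 (x + \<xi> *\<^sub>R axis a 1 + \<eta> *\<^sub>R axis b 1)
      = h * h * ?G2 (x + \<xi>' *\<^sub>R axis b 1 + \<eta>' *\<^sub>R axis a 1)"
    using \<xi>\<eta>(3) \<xi>\<eta>'(3)[unfolded swap] by linarith
  then have "?G1 (x + \<xi> *\<^sub>R axis a 1 + \<eta> *\<^sub>R axis b 1) = ?G2 (x + \<xi>' *\<^sub>R axis b 1 + \<eta>' *\<^sub>R axis a 1)"
    using \<open>h > 0\<close> by simp
  moreover have "dist (?G1 (x + \<xi> *\<^sub>R axis a 1 + \<eta> *\<^sub>R axis b 1)) (?G1 x) < e"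
    by (rule d1, rule order.strict_trans1[OF near[OF \<xi>\<eta>(1,2)] \<open>2 * h < d1\<close>])
  moreover have "dist (?G2 (x + \<xi>' *\<^sub>R axis b 1 + \<eta>' *\<^sub>R axis a 1)) (?G2 x) < e"
    by (rule d2, rule order.strict_trans1[OF near[OF \<xi>\<eta>'(1,2)] \<open>2 * h < d2\<close>])
  ultimately show False
    unfolding e_def dist_real_def by (simp add: abs_if split: if_split_asm)
qed

section \<open>Taylor expansions\<close>

fun dir_deriv :: "real^'d::finite \<Rightarrow> nat \<Rightarrow> (real \<Rightarrow> real^'d \<Rightarrow> real) \<Rightarrow> (real \<Rightarrow> real^'d \<Rightarrow> real)"
  where
    "dir_deriv c 0 f = f"
  | "dir_deriv c (Suc k) f = (\<lambda>t x. \<Sum>l\<in>UNIV. c$l * dir_deriv c k (pd (Some l) f) t x)"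

lemma smooth_tx_dir_deriv: "smooth_tx f \<Longrightarrow> smooth_tx (dir_deriv c k f)"
proof (induction k arbitrary: f)
  case (Suc k)
  then show ?case
    by (simp only: dir_deriv.simps) (intro smooth_tx_sum, auto intro: smooth_tx_pd)
qed simp

lemma dir_deriv_DERIV:
  assumes "smooth_tx f"
  shows "((\<lambda>h. dir_deriv c k f t (y + h *\<^sub>R c)) has_real_derivative
           dir_deriv c (Suc k) f t (y + h *\<^sub>R c)) (at h)"
  using assms
proof (induction k arbitrary: f)
  case 0
  then show ?case using smooth_tx_DERIV_direction by simp
next
  case (Suc k)
  then have "((\<lambda>h. \<Sum>l\<in>UNIV. c$l * dir_deriv c k (pd (Some l) f) t (y + h *\<^sub>R c)) has_real_derivative
      (\<Sum>l\<in>UNIV. c$l * dir_deriv c (Suc k) (pd (Some l) f) t (y + h *\<^sub>R c))) (at h)"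
    by (intro DERIV_sum DERIV_cmult Suc.IH smooth_tx_pd)
  then show ?case by simp
qed

lemma smooth_tx_bounded_near:
  assumes "smooth_tx f"
  obtains B where "\<And>t' y. \<bar>t' - t\<bar> \<le> 1 \<Longrightarrow> dist y x \<le> r \<Longrightarrow> \<bar>f t' y\<bar> \<le> B"
proof -
  have "compact ((\<lambda>p. f (fst p) (snd p)) ` (cball t 1 \<times> cball x r))"
    using smooth_tx_continuous[OF assms]
    by (intro compact_continuous_image compact_Times compact_cball) (auto elim: continuous_on_subset)
  then obtain B where "\<forall>v \<in> (\<lambda>p. f (fst p) (snd p)) ` (cball t 1 \<times> cball x r). norm v \<le> B"
    using compact_imp_bounded bounded_iff by metis
  then show thesis
    by (intro that[of B]) (auto simp: dist_real_def dist_commute)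
qed

lemma Maclaurin_bigo:
  fixes G :: "'a \<Rightarrow> nat \<Rightarrow> real \<Rightarrow> real" and \<eta> :: "'a \<Rightarrow> real"
  assumes "\<And>z m q. (G z m has_real_derivative G z (Suc m) q) (at q)"
    and "eventually (\<lambda>z. \<forall>q. \<bar>q\<bar> \<le> \<bar>\<eta> z\<bar> \<longrightarrow> \<bar>G z n q\<bar> \<le> B) F"
  shows "(\<lambda>z. G z 0 (\<eta> z) - (\<Sum>m<n. G z m 0 / fact m * \<eta> z ^ m)) \<in> O[F](\<lambda>z. \<eta> z ^ n)"
proof (rule bigoI[of _ "B / fact n"])
  show "eventually (\<lambda>z. norm (G z 0 (\<eta> z) - (\<Sum>m<n. G z m 0 / fact m * \<eta> z ^ m))
      \<le> B / fact n * norm (\<eta> z ^ n)) F"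
    using assms(2)
  proof eventually_elim
    case (elim z)
    obtain \<xi> where "\<bar>\<xi>\<bar> \<le> \<bar>\<eta> z\<bar>"
      and "G z 0 (\<eta> z) = (\<Sum>m<n. G z m 0 / fact m * \<eta> z ^ m) + G z n \<xi> / fact n * \<eta> z ^ n"
      using Maclaurin_bi_le[of "G z" "G z 0" n "\<eta> z"] assms(1) by blast
    with elim show ?case
      by (simp add: abs_mult divide_right_mono mult_right_mono)
  qed
qed

lemma taylor_time_bigo:
  assumes "smooth_tx f" and "(\<eta> \<longlongrightarrow> 0) F"
  shows "(\<lambda>z. f (t + \<eta> z) x - (\<Sum>m<n. iter_pd (replicate m None) f t x / fact m * \<eta> z ^ m))
           \<in> O[F](\<lambda>z. \<eta> z ^ n)"
proof -
  obtain B where B: "\<And>t' y. \<bar>t' - t\<bar> \<le> 1 \<Longrightarrow> dist y x \<le> 0 \<Longrightarrow> \<bar>iter_pd (replicate n None) f t' y\<bar> \<le> B"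
    using smooth_tx_bounded_near[OF smooth_tx_iter_pd[OF assms(1), of "replicate n None"], of t x 0]
    by metis
  have deriv: "((\<lambda>q. iter_pd (replicate m None) f (t + q) x) has_real_derivative
      iter_pd (replicate (Suc m) None) f (t + q) x) (at q)" for m q
  proof -
    have "pd_exists None (iter_pd (replicate m None) f)"
      using assms(1) by (simp add: smooth_tx_pd_exists smooth_tx_iter_pd)
    moreover have "((\<lambda>q. t + q) has_real_derivative 1) (at q)"
      by (auto intro!: derivative_eq_intros)
    ultimately show ?thesis
      using DERIV_chain2[OF pd_exists_time_DERIV] by fastforce
  qed
  have "eventually (\<lambda>z. \<bar>\<eta> z\<bar> < 1) F"
    using tendstoD[OF assms(2), of 1] by simp
  then have "eventually (\<lambda>z. \<forall>q. \<bar>q\<bar> \<le> \<bar>\<eta> z\<bar> \<longrightarrow> \<bar>iter_pd (replicate n None) f (t + q) x\<bar> \<le> B) F"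
    by (rule eventually_mono) (auto intro!: B)
  from Maclaurin_bigo[of "\<lambda>z m q. iter_pd (replicate m None) f (t + q) x", OF deriv this]
  show ?thesis
    by simp
qed

lemma taylor_direction_bigo:
  assumes "smooth_tx f" and "(\<tau> \<longlongrightarrow> t) F" and "(\<eta> \<longlongrightarrow> 0) F"
  shows "(\<lambda>z. f (\<tau> z) (x + \<eta> z *\<^sub>R c) - (\<Sum>m<n. dir_deriv c m f (\<tau> z) x / fact m * \<eta> z ^ m))
           \<in> O[F](\<lambda>z. \<eta> z ^ n)"
proof -
  obtain B where B: "\<And>t' y. \<bar>t' - t\<bar> \<le> 1 \<Longrightarrow> dist y x \<le> norm c \<Longrightarrow> \<bar>dir_deriv c n f t' y\<bar> \<le> B"
    using smooth_tx_bounded_near[OF smooth_tx_dir_deriv[OF assms(1)], of t x "norm c"] by metis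
  have "eventually (\<lambda>z. \<bar>\<tau> z - t\<bar> < 1) F" "eventually (\<lambda>z. \<bar>\<eta> z\<bar> < 1) F"
    using tendstoD[OF assms(2), of 1] tendstoD[OF assms(3), of 1] by (simp_all add: dist_real_def)
  then have "eventually (\<lambda>z. \<forall>q. \<bar>q\<bar> \<le> \<bar>\<eta> z\<bar> \<longrightarrow> \<bar>dir_deriv c n f (\<tau> z) (x + q *\<^sub>R c)\<bar> \<le> B) F"
  proof eventually_elim
    case (elim z)
    have "dist (x + q *\<^sub>R c) x \<le> norm c" if "\<bar>q\<bar> \<le> \<bar>\<eta> z\<bar>" for q
      using that elim(2) mult_right_mono[of "\<bar>q\<bar>" 1 "norm c"] by (simp add: dist_norm)
    with elim(1) show ?case
      by (auto intro!: B)
  qed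
  from Maclaurin_bigo[of "\<lambda>z m q. dir_deriv c m f (\<tau> z) (x + q *\<^sub>R c)", OF dir_deriv_DERIV[OF assms(1)] this]
  show ?thesis
    by simp
qed

section \<open>Consistency of the difference quotients\<close>

lemma bigo_divide_power:
  fixes f :: "real \<Rightarrow> real"
  assumes "f \<in> O[F](\<lambda>h. h ^ m)" and "k \<le> m"
  shows "(\<lambda>h. f h / h ^ k) \<in> O[F](\<lambda>h. h ^ (m - k))"
proof -
  obtain C where "C > 0" and bound: "eventually (\<lambda>h. norm (f h) \<le> C * norm (h ^ m)) F"
    using assms(1) by (elim landau_o.bigE)
  from bound have "eventually (\<lambda>h. norm (f h / h ^ k) \<le> C * norm (h ^ (m - k))) F"
  proof eventually_elim
    case (elim h)
    show ?case
    proof (cases "h = 0")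
      case False
      with elim assms(2) show ?thesis
        by (simp add: power_diff abs_mult power_abs divide_le_eq field_simps)
    qed (use elim \<open>C > 0\<close> in \<open>cases k; simp\<close>)
  qed
  then show ?thesis
    by (rule bigoI)
qed

lemma forward_time_step_bigo:
  assumes "smooth_tx f" and "s \<noteq> 0"
  shows "(\<lambda>dt. (f (t + 2 * dt) x + (s - 2) * f (t + dt) x + (1 - s) * f t x) / (s * dt) - pd None f t x)
           \<in> O[at 0](\<lambda>dt. dt)"
proof -
  define E where "E = (\<lambda>dt. f (t + dt) x - (f t x + pd None f t x * dt))"
  have "E \<in> O[at 0](\<lambda>dt. dt ^ 2)"
    using taylor_time_bigo[OF assms(1), of "\<lambda>dt. dt" "at 0" t x 2]
    by (simp add: E_def eval_nat_numeral)
  moreover have "(\<lambda>dt. E (2 * dt)) \<in> O[at 0](\<lambda>dt. dt ^ 2)"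
    using taylor_time_bigo[OF assms(1), of "\<lambda>dt. 2 * dt" "at 0" t x 2]
    by (simp add: E_def eval_nat_numeral power_mult_distrib tendsto_mult_right_zero)
  ultimately have "(\<lambda>dt. E (2 * dt) + (s - 2) * E dt) \<in> O[at 0](\<lambda>dt. dt ^ 2)"
    by (intro sum_in_bigo(1)) simp_all
  from bigo_divide_power[OF this, of 1]
  have "(\<lambda>dt. (E (2 * dt) + (s - 2) * E dt) / dt) \<in> O[at 0](\<lambda>dt. dt)"
    by simp
  then have "(\<lambda>dt. (E (2 * dt) + (s - 2) * E dt) / dt / s) \<in> O[at 0](\<lambda>dt. dt)"
    by (subst landau_o.big.cdiv_in_iff'[OF assms(2)])
  moreover have "eventually (\<lambda>dt. (E (2 * dt) + (s - 2) * E dt) / dt / s =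
      (f (t + 2 * dt) x + (s - 2) * f (t + dt) x + (1 - s) * f t x) / (s * dt) - pd None f t x) (at 0)"
    using eventually_neq_at_within[of 0 0 UNIV]
    by eventually_elim (simp add: E_def field_simps assms(2))
  ultimately show ?thesis
    using landau_o.big.in_cong by fastforce
qed

lemma diffusive_step_tendsto: "((\<lambda>h::real. h^2 / \<mu>) \<longlongrightarrow> 0) (at 0)"
  by (rule tendsto_divide_zero) (auto intro!: tendsto_eq_intros)

lemma diffusive_time_tendsto: "((\<lambda>h::real. t + h^2 / \<mu>) \<longlongrightarrow> t) (at 0)"
  using tendsto_add[OF tendsto_const diffusive_step_tendsto, of t \<mu>] by simp

lemma time_shift_bigo:
  assumes "smooth_tx f"
  shows "(\<lambda>h. f (t + h^2 / \<mu>) x - f t x) \<in> O[at 0](\<lambda>h. h^2)"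
proof -
  have "(\<lambda>h. f (t + h^2 / \<mu>) x - f t x) \<in> O[at 0](\<lambda>h. (h^2 / \<mu>) ^ 1)"
    using taylor_time_bigo[OF assms diffusive_step_tendsto, where t=t and x=x and n=1] by simp
  then show ?thesis
    by (rule landau_o.big.trans) (cases "\<mu> = 0"; simp)
qed

lemma diffusive_time_step_bigo:
  assumes "smooth_tx f" and "s \<noteq> 0" and "\<mu> \<noteq> 0"
  shows "(\<lambda>h. (f (t + 2 * (h^2 / \<mu>)) x + (s - 2) * f (t + h^2 / \<mu>) x + (1 - s) * f t x) / (s * (h^2 / \<mu>))
            - pd None f t x) \<in> O[at 0](\<lambda>h. h^2)"
proof -
  have "filterlim (\<lambda>h::real. h^2 / \<mu>) (at 0) (at 0)"
    using diffusive_step_tendsto eventually_neq_at_within[of 0 0 UNIV] assms(3)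
    by (intro filterlim_atI) (auto elim: eventually_mono)
  from landau_o.big.compose[OF forward_time_step_bigo[OF assms(1,2)] this]
  show ?thesis
    using assms(3) by simp
qed

lemma centred_difference_bigo:
  assumes "smooth_tx \<phi>"
  shows "(\<lambda>h. (\<phi> (t + h^2 / \<mu>) (x + h *\<^sub>R c) - \<phi> (t + h^2 / \<mu>) (x - h *\<^sub>R c)) / (2 * h)
              - dir_deriv c 1 \<phi> t x) \<in> O[at 0](\<lambda>h. h^2)"
proof -
  define \<tau> where "\<tau> = (\<lambda>h::real. t + h^2 / \<mu>)"
  define D where "D m = dir_deriv c m \<phi>" for m
  define Ep where "Ep = (\<lambda>h. \<phi> (\<tau> h) (x + h *\<^sub>R c) - (\<phi> (\<tau> h) x + D 1 (\<tau> h) x * h + D 2 (\<tau> h) x / 2 * h^2))"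
  define Em where "Em = (\<lambda>h. \<phi> (\<tau> h) (x - h *\<^sub>R c) - (\<phi> (\<tau> h) x - D 1 (\<tau> h) x * h + D 2 (\<tau> h) x / 2 * h^2))"
  define Q where "Q = (\<lambda>h. D 1 (\<tau> h) x - D 1 t x)"
  have "Ep \<in> O[at 0](\<lambda>h. h^3)"
    using taylor_direction_bigo[OF assms diffusive_time_tendsto tendsto_ident_at,
        where x=x and c=c and n=3]
    by (simp add: Ep_def D_def \<tau>_def eval_nat_numeral)
  moreover have "Em \<in> O[at 0](\<lambda>h. h^3)"
    using taylor_direction_bigo[OF assms diffusive_time_tendsto
        tendsto_minus[OF tendsto_ident_at, of "0::real" UNIV, simplified], where x=x and c=c and n=3]
    by (simp add: Em_def D_def \<tau>_def eval_nat_numeral)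
  ultimately have "(\<lambda>h. Ep h - Em h) \<in> O[at 0](\<lambda>h. h^3)"
    by (rule sum_in_bigo(2))
  from bigo_divide_power[OF this, of 1]
  have "(\<lambda>h. (Ep h - Em h) / h / 2) \<in> O[at 0](\<lambda>h. h^2)"
    using landau_o.big.cdiv_in_iff'[of 2 "\<lambda>h. (Ep h - Em h) / h"] by simp
  moreover have "Q \<in> O[at 0](\<lambda>h. h^2)"
    unfolding Q_def D_def \<tau>_def by (rule time_shift_bigo[OF smooth_tx_dir_deriv[OF assms]])
  ultimately have "(\<lambda>h. Q h + (Ep h - Em h) / h / 2) \<in> O[at 0](\<lambda>h. h^2)"
    by (intro sum_in_bigo(1))
  moreover have "eventually (\<lambda>h. Q h + (Ep h - Em h) / h / 2
      = (\<phi> (\<tau> h) (x + h *\<^sub>R c) - \<phi> (\<tau> h) (x - h *\<^sub>R c)) / (2 * h) - D 1 t x) (at 0)"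
    using eventually_neq_at_within[of 0 0 UNIV]
    by eventually_elim (simp add: Q_def Ep_def Em_def field_simps)
  ultimately show ?thesis
    unfolding \<tau>_def D_def by (simp add: landau_o.big.in_cong)
qed

lemma second_difference_bigo:
  assumes "smooth_tx \<phi>"
  shows "(\<lambda>h. (\<phi> (t + h^2 / \<mu>) (x + h *\<^sub>R c) + \<phi> (t + h^2 / \<mu>) (x - h *\<^sub>R c)
                - 2 * \<phi> (t + h^2 / \<mu>) x) / h^2 - dir_deriv c 2 \<phi> t x) \<in> O[at 0](\<lambda>h. h^2)"
proof -
  define \<tau> where "\<tau> = (\<lambda>h::real. t + h^2 / \<mu>)"
  define D where "D m = dir_deriv c m \<phi>" for m
  define Ep where "Ep = (\<lambda>h. \<phi> (\<tau> h) (x + h *\<^sub>R c)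
      - (\<phi> (\<tau> h) x + D 1 (\<tau> h) x * h + D 2 (\<tau> h) x / 2 * h^2 + D 3 (\<tau> h) x / 6 * h^3))"
  define Em where "Em = (\<lambda>h. \<phi> (\<tau> h) (x - h *\<^sub>R c)
      - (\<phi> (\<tau> h) x - D 1 (\<tau> h) x * h + D 2 (\<tau> h) x / 2 * h^2 - D 3 (\<tau> h) x / 6 * h^3))"
  define Q where "Q = (\<lambda>h. D 2 (\<tau> h) x - D 2 t x)"
  have "Ep \<in> O[at 0](\<lambda>h. h^4)"
    using taylor_direction_bigo[OF assms diffusive_time_tendsto tendsto_ident_at,
        where x=x and c=c and n=4]
    by (simp add: Ep_def D_def \<tau>_def eval_nat_numeral)
  moreover have "Em \<in> O[at 0](\<lambda>h. h^4)"
    using taylor_direction_bigo[OF assms diffusive_time_tendsto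
        tendsto_minus[OF tendsto_ident_at, of "0::real" UNIV, simplified], where x=x and c=c and n=4]
    by (simp add: Em_def D_def \<tau>_def eval_nat_numeral)
  ultimately have "(\<lambda>h. Ep h + Em h) \<in> O[at 0](\<lambda>h. h^4)"
    by (rule sum_in_bigo(1))
  from bigo_divide_power[OF this, of 2]
  have "(\<lambda>h. (Ep h + Em h) / h^2) \<in> O[at 0](\<lambda>h. h^2)"
    by simp
  moreover have "Q \<in> O[at 0](\<lambda>h. h^2)"
    unfolding Q_def D_def \<tau>_def by (rule time_shift_bigo[OF smooth_tx_dir_deriv[OF assms]])
  ultimately have "(\<lambda>h. Q h + (Ep h + Em h) / h^2) \<in> O[at 0](\<lambda>h. h^2)"
    by (intro sum_in_bigo(1))
  moreover have "eventually (\<lambda>h. Q h + (Ep h + Em h) / h^2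
      = (\<phi> (\<tau> h) (x + h *\<^sub>R c) + \<phi> (\<tau> h) (x - h *\<^sub>R c) - 2 * \<phi> (\<tau> h) x) / h^2 - D 2 t x) (at 0)"
    using eventually_neq_at_within[of 0 0 UNIV]
    by eventually_elim (simp add: Q_def Ep_def Em_def field_simps)
  ultimately show ?thesis
    unfolding \<tau>_def D_def by (simp add: landau_o.big.in_cong)
qed

section \<open>Multi-indices of order one and two\<close>

definition unit_index :: "'d \<Rightarrow> 'd \<Rightarrow> nat" where
  "unit_index a = (\<lambda>l. if l = a then 1 else 0)"

definition pair_index :: "'d \<Rightarrow> 'd \<Rightarrow> 'd \<Rightarrow> nat" where
  "pair_index a b = (\<lambda>l. unit_index a l + unit_index b l)"

lemma sum_unit_index [simp]: "(\<Sum>l\<in>(UNIV::'d::finite set). unit_index a l) = 1"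
  by (simp add: unit_index_def)

lemma multi_indices_Suc_pick:
  fixes n :: "'d::finite \<Rightarrow> nat"
  assumes "n \<in> multi_indices (Suc k)"
  obtains a where "n a > 0" "(\<lambda>l. n l - unit_index a l) \<in> multi_indices k"
proof -
  obtain a where "n a > 0"
  proof (rule ccontr)
    assume "\<not> thesis"
    with that have "\<forall>l. n l = 0"
      by auto
    with assms show False
      by (simp add: multi_indices_def)
  qed
  moreover have "(\<Sum>l\<in>UNIV. n l - unit_index a l) = (\<Sum>l\<in>UNIV. n l) - (\<Sum>l\<in>UNIV. unit_index a l)"
    using \<open>n a > 0\<close> by (intro sum_subtractf_nat) (simp add: unit_index_def)
  ultimately show thesis
    using assms that by (simp add: multi_indices_def)
qed

lemma multi_indices_1: "multi_indices 1 = range (unit_index :: 'd::finite \<Rightarrow> _)"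
proof (intro equalityI subsetI)
  fix n :: "'d \<Rightarrow> nat"
  assume "n \<in> multi_indices 1"
  then have "n \<in> multi_indices (Suc 0)"
    by simp
  then obtain a where "n a > 0" "(\<lambda>l. n l - unit_index a l) \<in> multi_indices 0"
    by (rule multi_indices_Suc_pick)
  then have le: "n l \<le> unit_index a l" for l
    by (simp add: multi_indices_def)
  have "n l = unit_index a l" for l
    using le[of l] \<open>n a > 0\<close> by (cases "l = a") (simp_all add: unit_index_def)
  then show "n \<in> range unit_index"
    by (metis rangeI ext)
qed (auto simp: multi_indices_def)

lemma multi_indices_2: "multi_indices 2 = (\<lambda>(a, b). pair_index a b) ` (UNIV :: ('d::finite \<times> 'd) set)"
proof (intro equalityI subsetI)
  fix n :: "'d \<Rightarrow> nat"
  assume "n \<in> multi_indices 2"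
  then have "n \<in> multi_indices (Suc 1)"
    by (simp add: numeral_2_eq_2)
  then obtain a where "n a > 0" "(\<lambda>l. n l - unit_index a l) \<in> multi_indices 1"
    by (rule multi_indices_Suc_pick)
  then obtain b where b: "(\<lambda>l. n l - unit_index a l) = unit_index b"
    unfolding multi_indices_1 by blast
  have "n l = pair_index a b l" for l
    using fun_cong[OF b, of l] \<open>n a > 0\<close>
    by (cases "l = a") (simp_all add: pair_index_def unit_index_def)
  then show "n \<in> (\<lambda>(a, b). pair_index a b) ` UNIV"
    by (metis (no_types, lifting) case_prod_conv ext rangeI)
qed (auto simp: multi_indices_def pair_index_def sum.distrib)

lemma pair_index_eq_iff:
  "pair_index l m = pair_index a b \<longleftrightarrow> (l = a \<and> m = b) \<or> (l = b \<and> m = a)"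
proof
  assume "pair_index l m = pair_index a b"
  then have at: "unit_index l k + unit_index m k = unit_index a k + unit_index b k" for k
    by (simp add: pair_index_def fun_eq_iff)
  have "l = a \<or> l = b"
    using at[of l] by (auto simp: unit_index_def split: if_splits)
  then show "(l = a \<and> m = b) \<or> (l = b \<and> m = a)"
  proof
    assume "l = a"
    with at[of m] show ?thesis
      by (auto simp: unit_index_def split: if_splits)
  next
    assume "l = b"
    with at[of m] show ?thesis
      by (auto simp: unit_index_def split: if_splits)
  qed
qed (auto simp: pair_index_def fun_eq_iff)

lemma mpow_unit_index: "mpow c (unit_index a) = c$a"
  unfolding mpow_def unit_index_def by (simp add: if_distrib cong: if_cong)

lemma mpow_pair_index: "mpow c (pair_index a b) = c$a * c$b"
  unfolding mpow_def pair_index_def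
  by (simp add: power_add prod.distrib mpow_def[symmetric] mpow_unit_index)

lemma mfact_pair_index: "mfact (pair_index a b) = (if a = b then 2 else 1)"
proof (cases "a = b")
  case True
  then have "\<forall>l. fact (pair_index a b l) = (if l = a then 2 else (1::real))"
    by (simp add: pair_index_def unit_index_def numeral_2_eq_2)
  with True show ?thesis
    by (simp add: mfact_def)
next
  case False
  then have "\<forall>l. fact (pair_index a b l) = (1::real)"
    by (simp add: pair_index_def unit_index_def)
  with False show ?thesis
    by (simp add: mfact_def)
qed

lemma distinct_coord_list [simp]: "distinct (coord_list :: 'd::finite list)"
  and set_coord_list [simp]: "set (coord_list :: 'd list) = UNIV"
proof -
  obtain xs :: "'d list" where "distinct xs \<and> set xs = UNIV"
    using finite_distinct_list[OF finite, of "UNIV :: 'd set"] by blast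
  then have "distinct (coord_list :: 'd list) \<and> set (coord_list :: 'd list) = UNIV"
    unfolding coord_list_def by (rule someI[of "\<lambda>xs. distinct xs \<and> set xs = UNIV"])
  then show "distinct (coord_list :: 'd list)" "set (coord_list :: 'd list) = UNIV"
    by simp_all
qed

lemma concat_map_replicate_single:
  assumes "distinct xs" and "\<forall>k. k \<noteq> l \<longrightarrow> n k = 0"
  shows "concat (map (\<lambda>k. replicate (n k) (Some k)) xs)
       = (if l \<in> set xs then replicate (n l) (Some l) else [])"
  using assms by (induction xs) auto

lemma concat_map_replicate_le_1:
  assumes "\<forall>k. n k \<le> 1"
  shows "concat (map (\<lambda>k. replicate (n k) (Some k)) xs) = map Some (filter (\<lambda>k. n k = 1) xs)"
proof (induction xs)
  case (Cons a xs)
  have "n a = 0 \<or> n a = 1"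
    using assms by (metis le_neq_implies_less less_one)
  with Cons show ?case
    by auto
qed simp

lemma distinct_set_doubleton:
  assumes "distinct L" and "set L = {a, b}" and "a \<noteq> b"
  shows "L = [a, b] \<or> L = [b, a]"
proof -
  have "length L = 2"
    using distinct_card[OF assms(1)] assms(2,3) by simp
  then obtain u v where L: "L = [u, v]"
    by (metis (no_types) One_nat_def Suc_length_conv length_0_conv numeral_2_eq_2)
  with assms(2) have "{u, v} = {a, b}"
    by simp
  with L show ?thesis
    by (auto simp: doubleton_eq_iff)
qed

lemma dx_multi_unit_index: "dx_multi (unit_index l) f = pd (Some l) f"
proof -
  have "concat (map (\<lambda>k. replicate (unit_index l k) (Some k)) coord_list) = [Some l]"
    using concat_map_replicate_single[of coord_list l "unit_index l"] by (simp add: unit_index_def)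
  then show ?thesis
    by (simp add: dx_multi_def)
qed

lemma dx_multi_pair_index:
  assumes "smooth_tx f"
  shows "dx_multi (pair_index a b) f = pd (Some b) (pd (Some a) f)"
proof (cases "a = b")
  case True
  have "concat (map (\<lambda>k. replicate (pair_index a b k) (Some k)) coord_list) = [Some a, Some a]"
    using concat_map_replicate_single[of coord_list a "pair_index a b"] True
    by (simp add: pair_index_def unit_index_def numeral_2_eq_2)
  with True show ?thesis
    by (simp add: dx_multi_def)
next
  case False
  let ?L = "filter (\<lambda>k. pair_index a b k = 1) coord_list"
  have "concat (map (\<lambda>k. replicate (pair_index a b k) (Some k)) coord_list) = map Some ?L"
    using False by (intro concat_map_replicate_le_1) (simp add: pair_index_def unit_index_def)
  moreover have "?L = [a, b] \<or> ?L = [b, a]"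
    using False by (intro distinct_set_doubleton) (auto simp: pair_index_def unit_index_def)
  ultimately show ?thesis
    using pd_commute[OF assms, of a b] by (auto simp: dx_multi_def)
qed

lemma sum_multi_indices_1:
  "(\<Sum>n\<in>multi_indices 1. mpow c n * dx_multi n f t x) = dir_deriv c 1 f t x"
proof -
  have "inj (unit_index :: 'd \<Rightarrow> _)"
    by (auto simp: inj_def unit_index_def fun_eq_iff)
  then have "(\<Sum>n\<in>multi_indices 1. mpow c n * dx_multi n f t x)
      = (\<Sum>l\<in>UNIV. mpow c (unit_index l) * dx_multi (unit_index l) f t x)"
    unfolding multi_indices_1 by (rule sum.reindex[unfolded o_def])
  then show ?thesis
    by (simp add: mpow_unit_index dx_multi_unit_index)
qed

text \<open>Every multi-index of order two is hit twice by the ordered pairs \<open>(a, b)\<close>, except the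
  diagonal ones, which are compensated by \<open>mfact\<close>; Schwarz's theorem identifies the two
  mixed derivatives.\<close>
lemma sum_multi_indices_2:
  assumes "smooth_tx f"
  shows "(\<Sum>n\<in>multi_indices 2. mpow c n / mfact n * dx_multi n f t x) = dir_deriv c 2 f t x / 2"
proof -
  define T where "T l m = pd (Some m) (pd (Some l) f) t x" for l m
  define g where "g n = mpow c n / mfact n * dx_multi n f t x" for n
  have fibre: "(\<Sum>p\<in>{p \<in> UNIV. (\<lambda>(a, b). pair_index a b) p = n}. c$(fst p) * c$(snd p) * T (fst p) (snd p))
      = 2 * g n" if "n \<in> multi_indices 2" for n
  proof -
    from that obtain a b where n: "n = pair_index a b"
      unfolding multi_indices_2 by auto
    have "{p \<in> UNIV. (\<lambda>(a, b). pair_index a b) p = pair_index a b} = {(a, b), (b, a)}"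
      by (auto simp: pair_index_eq_iff)
    moreover have "T a b = T b a"
      unfolding T_def using pd_commute[OF assms] by metis
    ultimately show ?thesis
      unfolding n g_def
      by (cases "a = b") (simp_all add: mpow_pair_index mfact_pair_index dx_multi_pair_index[OF assms] T_def)
  qed
  have "2 * (\<Sum>n\<in>multi_indices 2. g n) = (\<Sum>n\<in>multi_indices 2. 2 * g n)"
    by (simp add: sum_distrib_left)
  also have "\<dots> = (\<Sum>n\<in>multi_indices 2. \<Sum>p\<in>{p \<in> UNIV. (\<lambda>(a, b). pair_index a b) p = n}.
           c$(fst p) * c$(snd p) * T (fst p) (snd p))"
    by (rule sum.cong[OF refl fibre[symmetric]])
  also have "\<dots> = (\<Sum>p\<in>UNIV. c$(fst p) * c$(snd p) * T (fst p) (snd p))"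
    by (rule sum.group) (auto simp: multi_indices_2)
  also have "\<dots> = (\<Sum>l\<in>UNIV. \<Sum>m\<in>UNIV. c$l * c$m * T l m)"
    unfolding UNIV_Times_UNIV[symmetric] sum.cartesian_product by (simp add: split_beta)
  also have "\<dots> = dir_deriv c 2 f t x"
    by (simp add: numeral_2_eq_2 T_def sum_distrib_left mult.assoc)
  finally show ?thesis
    by (simp add: g_def)
qed

section \<open>The modified equation\<close>

text \<open>No hypothesis \<open>h \<noteq> 0\<close> is needed: at \<open>h = 0\<close> both sides reduce to their
  derivative terms because \<open>x / 0 = 0\<close>, so the identity can be used to rewrite under the binder.\<close>
lemma scheme_residual_split:
  fixes \<phi> :: "real \<Rightarrow> real^'d::finite \<Rightarrow> real"
  assumes "smooth_tx \<phi>" and "\<mu> \<noteq> 0" and "s \<noteq> 0"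
  shows "\<mu> / (s * h^2) * p2op s (h^2 / \<mu>) h W c (\<lambda>k. if even k then h * etil k else eps k) \<phi> t x
      - (pd None \<phi> t x
         + \<mu> * (\<Sum>j=1..W. etil (2*j) * (\<Sum>n\<in>multi_indices 1. mpow (c (2*j)) n * dx_multi n \<phi> t x))
         - 2 * \<mu> * (1/s - 1/2) * (\<Sum>j=1..W. eps (2*j+1) *
             (\<Sum>n\<in>multi_indices 2. mpow (c (2*j)) n / mfact n * dx_multi n \<phi> t x)))
    = ((\<phi> (t + 2 * (h^2 / \<mu>)) x + (s - 2) * \<phi> (t + h^2 / \<mu>) x + (1 - s) * \<phi> t x) / (s * (h^2 / \<mu>))
         - pd None \<phi> t x)
      + (\<Sum>j=1..W. \<mu> * etil (2*j) *
          ((\<phi> (t + h^2 / \<mu>) (x + h *\<^sub>R c (2*j)) - \<phi> (t + h^2 / \<mu>) (x - h *\<^sub>R c (2*j))) / (2 * h)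
           - dir_deriv (c (2*j)) 1 \<phi> t x))
      + (\<Sum>j=1..W. \<mu> * (s - 2) / (2 * s) * eps (2*j+1) *
          ((\<phi> (t + h^2 / \<mu>) (x + h *\<^sub>R c (2*j)) + \<phi> (t + h^2 / \<mu>) (x - h *\<^sub>R c (2*j))
            - 2 * \<phi> (t + h^2 / \<mu>) x) / h^2 - dir_deriv (c (2*j)) 2 \<phi> t x))"
    (is "?lhs = ?T + ?A + ?S")
proof -
  define \<tau> where "\<tau> = t + h^2 / \<mu>"
  define P where "P j = \<phi> \<tau> (x + h *\<^sub>R c (2*j))" for j
  define M where "M j = \<phi> \<tau> (x - h *\<^sub>R c (2*j))" for j
  define \<kappa> where "\<kappa> = \<mu> / (s * h^2)"
  define X where "X = \<phi> (t + 2 * (h^2 / \<mu>)) x + (s - 2) * \<phi> \<tau> x + (1 - s) * \<phi> t x"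
  have p2op: "p2op s (h^2 / \<mu>) h W c (\<lambda>k. if even k then h * etil k else eps k) \<phi> t x
      = X - s * (\<Sum>j=1..W. h * etil (2*j) * ((M j - P j) / 2))
        + (s - 2) * (\<Sum>j=1..W. eps (2*j+1) * ((M j + P j) / 2 - \<phi> \<tau> x))"
    unfolding p2op_def zsh_def Aop_def Sop_def xsh_def
    by (simp add: X_def P_def M_def \<tau>_def add.assoc)
  have "?lhs = (\<kappa> * X - pd None \<phi> t x)
      + (\<Sum>j=1..W. \<kappa> * (- s * (h * etil (2*j) * ((M j - P j) / 2)))
          - \<mu> * (etil (2*j) * dir_deriv (c (2*j)) 1 \<phi> t x))
      + (\<Sum>j=1..W. \<kappa> * (s - 2) * (eps (2*j+1) * ((M j + P j) / 2 - \<phi> \<tau> x))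
          + 2 * \<mu> * (1/s - 1/2) * (eps (2*j+1) * (dir_deriv (c (2*j)) 2 \<phi> t x / 2)))"
    unfolding p2op \<kappa>_def[symmetric] sum_multi_indices_1 sum_multi_indices_2[OF assms(1)]
    by (simp add: sum.distrib sum_subtractf sum_distrib_left sum_divide_distrib diff_divide_distrib
        algebra_simps)
  also have "\<dots> = ?T + ?A + ?S"
    using assms(2,3) unfolding \<kappa>_def X_def P_def M_def \<tau>_def
    by (intro arg_cong2[where f = "(+)"] sum.cong) (cases "h = 0"; simp add: field_simps power2_eq_square)+
  finally show ?thesis .
qed

theorem proposition12:
  fixes W :: nat and s \<mu> :: real
    and c :: "nat \<Rightarrow> real^'d::finite"
    and etil eps :: "nat \<Rightarrow> real"
    and \<phi> :: "real \<Rightarrow> real^'d \<Rightarrow> real"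
    and t :: real and x :: "real^'d"
  assumes "W \<ge> 1" and "0 < s" and "s \<le> 2" and "0 < \<mu>"
    and "c 1 = 0"
    and "\<forall>j\<in>{1..W}. c (2*j+1) = - c (2*j)"
    and "\<forall>j\<in>{1..W}. \<forall>l. c (2*j) $ l \<in> \<int>"
    and "eps 1 = 1"
    and "smooth_tx \<phi>"
    and "0 \<le> t"
  shows "(\<lambda>dx. \<mu> / (s * dx^2) *
             p2op s (dx^2 / \<mu>) dx W c (\<lambda>k. if even k then dx * etil k else eps k) \<phi> t x
           - (pd None \<phi> t x
              + \<mu> * (\<Sum>j=1..W. etil (2*j) *
                  (\<Sum>n\<in>multi_indices 1. mpow (c (2*j)) n * dx_multi n \<phi> t x))
              - 2 * \<mu> * (1/s - 1/2) * (\<Sum>j=1..W. eps (2*j+1) *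
                  (\<Sum>n\<in>multi_indices 2. mpow (c (2*j)) n / mfact n * dx_multi n \<phi> t x))))
         \<in> O[at_right 0](\<lambda>dx. dx^2)"
proof -
  have "\<mu> \<noteq> 0" and "s \<noteq> 0"
    using \<open>0 < \<mu>\<close> \<open>0 < s\<close> by simp_all
  have "at_right (0::real) \<le> at 0"
    by (rule at_le) simp
  show ?thesis
    unfolding scheme_residual_split[OF \<open>smooth_tx \<phi>\<close> \<open>\<mu> \<noteq> 0\<close> \<open>s \<noteq> 0\<close>]
    by (rule landau_o.big.filter_mono[OF \<open>at_right 0 \<le> at 0\<close>],
        intro sum_in_bigo(1) big_sum_in_bigo cmult_in_bigo_iff[THEN iffD2] disjI2
          diffusive_time_step_bigo[OF \<open>smooth_tx \<phi>\<close> \<open>s \<noteq> 0\<close> \<open>\<mu> \<noteq> 0\<close>]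
          centred_difference_bigo[OF \<open>smooth_tx \<phi>\<close>] second_difference_bigo[OF \<open>smooth_tx \<phi>\<close>])
qed

end
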